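(* Let $P(u)=\sum_{\ell=1}^kc_\ell e^{-\lambda_\ell u}$ on $[0,\infty)$ with $0<\lambda_1<\dots<\lambda_k$ and nonzero reals $c_1,\dots,c_k$. Assume the sequence $c_1,\dots,c_k$ has at most two sign changes, $P(0)<0$, and $P(u)\to0$ from above as $u\to\infty$ (i.e. $P(u)>0$ for all sufficiently large $u$ and $\lim_{u\to\infty}P(u)=0$). Then there exists $u_0>0$ such that for every non-decreasing function $f$ on $[0,\infty)$ and every non-negative finite Borel measure $\nu$ on $[0,\infty)$ for which the integrals converge, $\int_0^\infty f(u)P(u)\,d\nu(u)\ge f(u_0)\int_0^\infty P(u)\,d\nu(u)$.
   Context: The number of sign changes of a finite sequence of nonzero reals is the number of consecutive pairs of entries with opposite signs. *)

theory Defs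
  imports "HOL-Probability.Probability"
begin

definition sign_changes :: "(nat \<Rightarrow> real) \<Rightarrow> nat \<Rightarrow> nat" where
  "sign_changes c k = card {i. 1 \<le> i \<and> i < k \<and> c i * c (i + 1) < 0}"

definition expsum :: "(nat \<Rightarrow> real) \<Rightarrow> (nat \<Rightarrow> real) \<Rightarrow> nat \<Rightarrow> real \<Rightarrow> real" where
  "expsum c lam k u = (\<Sum>l = 1..k. c l * exp (- lam l * u))"

end

theory Submission
  imports Defs
begin

text \<open>Descartes' rule of signs for exponential sums: multiplying by \<open>exp (s u)\<close> and applying
  Rolle's theorem shows that the number of sign alternations of \<open>P\<close> along increasing points is
  at most the number of sign changes of its coefficients. With at most two sign changes,
  \<open>P 0 < 0\<close> and \<open>P > 0\<close> near infinity, \<open>P\<close> therefore changes sign exactly once, from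
  negative to positive, at some \<open>u0 > 0\<close>. Then \<open>(f u - f u0) P u \<ge> 0\<close> pointwise for every
  non-decreasing \<open>f\<close>, and integrating gives the inequality.\<close>

lemma expsum_has_real_derivative:
  "(expsum c lam k has_real_derivative expsum (\<lambda>l. - c l * lam l) lam k u) (at u)"
  unfolding expsum_def
  by (auto intro!: derivative_eq_intros sum.cong simp: sum_negf[symmetric])

lemma expsum_shift_exponents:
  "expsum c (\<lambda>l. lam l - s) k u = exp (s * u) * expsum c lam k u"
  unfolding expsum_def by (simp add: sum_distrib_left algebra_simps mult_exp_exp)

lemma stepwise_less_imp_less:
  fixes lam :: "nat \<Rightarrow> 'a::order"
  assumes "\<forall>l. 1 \<le> l \<and> l < k \<longrightarrow> lam l < lam (l + 1)" "1 \<le> a" "a < b" "b \<le> k"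
  shows "lam a < lam b"
  using assms(3,2,4)
proof (induction a b rule: less_Suc_induct)
  case (1 i) then show ?case using assms(1) by simp
next
  case (2 i j l) then show ?case by (meson order.strict_trans order.strict_trans1 less_imp_le_nat order_trans)
qed

lemma sign_changes_eq_0_iff:
  "sign_changes c k = 0 \<longleftrightarrow> (\<forall>i. 1 \<le> i \<and> i < k \<longrightarrow> \<not> c i * c (i + 1) < 0)"
proof -
  have "finite {i. 1 \<le> i \<and> i < k \<and> c i * c (i + 1) < 0}" by (rule finite_subset[of _ "{..<k}"]) auto
  then show ?thesis unfolding sign_changes_def by auto
qed

lemma sign_changes_eq_0_imp_same_sign:
  fixes c :: "nat \<Rightarrow> real"
  assumes "sign_changes c k = 0" "\<forall>l. 1 \<le> l \<and> l \<le> k \<longrightarrow> c l \<noteq> 0" "1 \<le> l" "l \<le> k"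
  shows "0 < c l * c 1"
  using assms(3,4)
proof (induction l rule: dec_induct)
  case base
  have "c 1 \<noteq> 0" using assms(2,3,4) by auto
  then show ?case using not_real_square_gt_zero by blast
next
  case (step l)
  have "0 < c l * c (l + 1)"
    using assms(1,2) step by (auto simp: sign_changes_eq_0_iff less_le)
  with step show ?case by (auto simp: zero_less_mult_iff)
qed

lemma expsum_no_sign_change_same_sign:
  assumes "sign_changes c k = 0" "\<forall>l. 1 \<le> l \<and> l \<le> k \<longrightarrow> c l \<noteq> 0"
  shows "\<not> expsum c lam k a * expsum c lam k b < 0"
proof (cases "k = 0")
  case True then show ?thesis by (simp add: expsum_def)
next
  case False
  have pos: "0 < expsum c lam k u * c 1" for u
    unfolding expsum_def sum_distrib_right
  proof (rule sum_pos)
    fix l assume "l \<in> {1..k}"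
    then have "0 < (c l * c 1) * exp (- lam l * u)"
      using sign_changes_eq_0_imp_same_sign[OF assms] by simp
    then show "0 < c l * exp (- lam l * u) * c 1" by (simp add: algebra_simps)
  qed (use False in auto)
  have "0 < (expsum c lam k a * c 1) * (expsum c lam k b * c 1)" using pos[of a] pos[of b] by simp
  then show ?thesis by (auto simp: zero_less_mult_iff mult_less_0_iff)
qed

lemma less_between_consecutive_iff:
  fixes lam :: "nat \<Rightarrow> real"
  assumes lam_incr: "\<forall>l. 1 \<le> l \<and> l < k \<longrightarrow> lam l < lam (l + 1)"
    and "1 \<le> j" "j < k" "lam j < s" "s < lam (j + 1)" "1 \<le> l" "l \<le> k"
  shows "lam l < s \<longleftrightarrow> l \<le> j" and "lam l \<noteq> s"
proof -
  have "lam l \<le> lam j" if "l \<le> j"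
    using stepwise_less_imp_less[OF lam_incr, of l j] that assms(6) assms(3) by (cases "l = j") auto
  moreover have "lam (j + 1) \<le> lam l" if "\<not> l \<le> j"
    using stepwise_less_imp_less[OF lam_incr, of "j + 1" l] that assms(2,7) by (cases "l = j + 1") auto
  ultimately show "lam l < s \<longleftrightarrow> l \<le> j" and "lam l \<noteq> s"
    using assms(4,5) by (cases "l \<le> j"; auto)+
qed

lemma sign_changes_mult_gap:
  fixes c lam :: "nat \<Rightarrow> real"
  assumes lam_incr: "\<forall>l. 1 \<le> l \<and> l < k \<longrightarrow> lam l < lam (l + 1)"
    and j: "1 \<le> j" "j < k" "c j * c (j + 1) < 0"
    and s: "lam j < s" "s < lam (j + 1)"
  shows "sign_changes (\<lambda>l. c l * (s - lam l)) k = sign_changes c k - 1"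
proof -
  note gap = less_between_consecutive_iff[OF lam_incr j(1,2) s]
  have gap_prod: "0 < (s - lam i) * (s - lam (i + 1)) \<longleftrightarrow> i \<noteq> j" if "1 \<le> i" "i < k" for i
    using gap[of i] gap[of "i + 1"] that by (auto simp: zero_less_mult_iff)
  define A where "A = {i. 1 \<le> i \<and> i < k \<and> c i * c (i + 1) < 0}"
  have "{i. 1 \<le> i \<and> i < k \<and> (c i * (s - lam i)) * (c (i + 1) * (s - lam (i + 1))) < 0} = A - {j}"
  proof -
    have "(c i * (s - lam i)) * (c (i + 1) * (s - lam (i + 1))) < 0 \<longleftrightarrow> c i * c (i + 1) < 0 \<and> i \<noteq> j"
      if "1 \<le> i" "i < k" for i
    proof -
      have "(c i * (s - lam i)) * (c (i + 1) * (s - lam (i + 1)))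
          = (c i * c (i + 1)) * ((s - lam i) * (s - lam (i + 1)))" by (simp add: algebra_simps)
      then show ?thesis
        using gap_prod[OF that] j(3) by (cases "i = j") (auto simp: mult_less_0_iff zero_less_mult_iff)
    qed
    then show ?thesis unfolding A_def by auto
  qed
  moreover have "finite A" unfolding A_def by (rule finite_subset[of _ "{..<k}"]) auto
  moreover have "j \<in> A" using j unfolding A_def by simp
  ultimately show ?thesis unfolding sign_changes_def A_def[symmetric] by simp
qed

lemma alternating_signs_derivative:
  fixes Q Q' :: "real \<Rightarrow> real"
  assumes deriv: "\<And>u. (Q has_real_derivative Q' u) (at u)"
    and x_incr: "\<forall>i<Suc n. x i < x (i + 1)"
    and Q_alt: "\<forall>i<Suc n. Q (x i) * Q (x (i + 1)) < 0"
  obtains \<xi> where "\<forall>i<n. \<xi> i < \<xi> (i + 1)" "\<forall>i<n. Q' (\<xi> i) * Q' (\<xi> (i + 1)) < 0"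
proof -
  have "\<exists>z. x i < z \<and> z < x (i + 1) \<and> 0 < Q' z * Q (x (i + 1))" if "i < Suc n" for i
  proof -
    have "x i < x (i + 1)" using x_incr that by blast
    then obtain z where z: "x i < z" "z < x (i + 1)" "Q (x (i + 1)) - Q (x i) = (x (i + 1) - x i) * Q' z"
      using MVT2[of "x i" "x (i + 1)" Q Q'] deriv by blast
    \<comment> \<open>Q changes sign between the endpoints, so the increment has the sign of Q at the right end.\<close>
    have "0 < (Q (x (i + 1)) - Q (x i)) * Q (x (i + 1))"
      using Q_alt that by (auto simp: algebra_simps mult_less_0_iff zero_less_mult_iff)
    then have "0 < (x (i + 1) - x i) * (Q' z * Q (x (i + 1)))"
      unfolding z(3) by (simp add: algebra_simps)
    then show ?thesis using z(1,2) by (auto simp: zero_less_mult_iff)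
  qed
  then obtain \<xi> where \<xi>: "\<And>i. i < Suc n \<Longrightarrow> x i < \<xi> i \<and> \<xi> i < x (i + 1) \<and> 0 < Q' (\<xi> i) * Q (x (i + 1))"
    by metis
  show ?thesis
  proof
    show "\<forall>i<n. \<xi> i < \<xi> (i + 1)"
      using \<xi> by (metis add_less_cancel_right less_SucI order.strict_trans Suc_eq_plus1)
    show "\<forall>i<n. Q' (\<xi> i) * Q' (\<xi> (i + 1)) < 0"
    proof (intro allI impI)
      fix i assume "i < n"
      then have "0 < Q' (\<xi> i) * Q (x (i + 1))" "0 < Q' (\<xi> (i + 1)) * Q (x (i + 1 + 1))"
        "Q (x (i + 1)) * Q (x (i + 1 + 1)) < 0"
        using \<xi>[of i] \<xi>[of "i + 1"] Q_alt by auto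
      then show "Q' (\<xi> i) * Q' (\<xi> (i + 1)) < 0"
        by (auto simp: zero_less_mult_iff mult_less_0_iff)
    qed
  qed
qed

lemma expsum_alternations_le_sign_changes:
  fixes c lam x :: "nat \<Rightarrow> real"
  assumes "\<forall>l. 1 \<le> l \<and> l < k \<longrightarrow> lam l < lam (l + 1)"
    and "\<forall>l. 1 \<le> l \<and> l \<le> k \<longrightarrow> c l \<noteq> 0"
    and "\<forall>i<m. x i < x (i + 1)"
    and "\<forall>i<m. expsum c lam k (x i) * expsum c lam k (x (i + 1)) < 0"
  shows "m \<le> sign_changes c k"
  using assms
proof (induction m arbitrary: c lam x)
  case 0 then show ?case by simp
next
  case (Suc n)
  note lam_incr = Suc.prems(1) and c_nz = Suc.prems(2)
  have "sign_changes c k \<noteq> 0"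
    using expsum_no_sign_change_same_sign[OF _ c_nz] Suc.prems(4) by blast
  then obtain j where j: "1 \<le> j" "j < k" "c j * c (j + 1) < 0"
    unfolding sign_changes_eq_0_iff by blast
  define s where "s = (lam j + lam (j + 1)) / 2"
  have s: "lam j < s" "s < lam (j + 1)" using lam_incr j unfolding s_def by auto
  define c' where "c' l = c l * (s - lam l)" for l
  define lam' where "lam' = (\<lambda>l. lam l - s)"
  \<comment> \<open>\<open>exp (s u) P u\<close> has the sign pattern of \<open>P\<close>, and its derivative has coefficients
    \<open>c l (s - lam l)\<close>: the sign change at \<open>j\<close> is lost, all others survive.\<close>
  have deriv: "(expsum c lam' k has_real_derivative expsum c' lam' k u) (at u)" for u
  proof -
    have "(\<lambda>l. - c l * lam' l) = c'" unfolding c'_def lam'_def by (auto simp: algebra_simps)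
    then show ?thesis using expsum_has_real_derivative[of c lam' k u] by simp
  qed
  have "\<forall>i<Suc n. expsum c lam' k (x i) * expsum c lam' k (x (i + 1)) < 0"
  proof (intro allI impI)
    fix i assume "i < Suc n"
    moreover have "expsum c lam' k (x i) * expsum c lam' k (x (i + 1))
        = (exp (s * x i) * exp (s * x (i + 1))) * (expsum c lam k (x i) * expsum c lam k (x (i + 1)))"
      unfolding lam'_def expsum_shift_exponents by (simp only: ac_simps)
    ultimately show "expsum c lam' k (x i) * expsum c lam' k (x (i + 1)) < 0"
      using Suc.prems(4) by (simp add: mult_pos_neg)
  qed
  then obtain \<xi> where "\<forall>i<n. \<xi> i < \<xi> (i + 1)"
    "\<forall>i<n. expsum c' lam' k (\<xi> i) * expsum c' lam' k (\<xi> (i + 1)) < 0"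
    using alternating_signs_derivative[OF deriv Suc.prems(3)] by blast
  moreover have "\<forall>l. 1 \<le> l \<and> l < k \<longrightarrow> lam' l < lam' (l + 1)"
    using lam_incr unfolding lam'_def by auto
  moreover have "\<forall>l. 1 \<le> l \<and> l \<le> k \<longrightarrow> c' l \<noteq> 0"
    using c_nz less_between_consecutive_iff(2)[OF lam_incr j(1,2) s] unfolding c'_def by force
  ultimately have "n \<le> sign_changes c' k" using Suc.IH by blast
  also have "sign_changes c' k = sign_changes c k - 1"
    unfolding c'_def by (rule sign_changes_mult_gap[OF lam_incr j s])
  finally show ?case using \<open>sign_changes c k \<noteq> 0\<close> by linarith
qed

lemma expsum_no_downcrossing:
  fixes c lam :: "nat \<Rightarrow> real"
  assumes "\<forall>l. 1 \<le> l \<and> l < k \<longrightarrow> lam l < lam (l + 1)"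
    and "\<forall>l. 1 \<le> l \<and> l \<le> k \<longrightarrow> c l \<noteq> 0"
    and "sign_changes c k \<le> 2"
    and P0: "expsum c lam k 0 < 0"
    and Ppos: "eventually (\<lambda>u. expsum c lam k u > 0) at_top"
    and "0 \<le> a" "a < b" "expsum c lam k a > 0"
  shows "expsum c lam k b \<ge> 0"
proof (rule ccontr)
  assume Pb: "\<not> expsum c lam k b \<ge> 0"
  obtain N where N: "\<And>u. N \<le> u \<Longrightarrow> expsum c lam k u > 0"
    using Ppos unfolding eventually_at_top_linorder by blast
  define d where "d = max N (b + 1)"
  have "0 < a" using assms(6,8) P0 by (cases "a = 0") auto
  define x :: "nat \<Rightarrow> real" where "x = (\<lambda>i. [0, a, b, d] ! i)"
  have "\<forall>i<3. x i < x (i + 1)"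
    using \<open>0 < a\<close> assms(7) by (simp add: numeral_3_eq_3 All_less_Suc x_def d_def)
  moreover have "\<forall>i<3. expsum c lam k (x i) * expsum c lam k (x (i + 1)) < 0"
    using Pb assms(8) P0 N[of d]
    by (simp add: numeral_3_eq_3 All_less_Suc x_def d_def mult_neg_pos mult_pos_neg)
  ultimately have "3 \<le> sign_changes c k"
    by (rule expsum_alternations_le_sign_changes[OF assms(1,2)])
  then show False using assms(3) by simp
qed

lemma single_sign_crossing:
  fixes P :: "real \<Rightarrow> real"
  assumes "isCont P 0" and P0: "P 0 < 0" and "eventually (\<lambda>u. P u > 0) at_top"
    and no_downcrossing: "\<And>a b. 0 \<le> a \<Longrightarrow> a < b \<Longrightarrow> P a > 0 \<Longrightarrow> P b \<ge> 0"
  shows "\<exists>u0 > 0. (\<forall>u. 0 \<le> u \<and> u < u0 \<longrightarrow> P u \<le> 0) \<and> (\<forall>u > u0. P u \<ge> 0)"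
proof -
  define S where "S = {u. 0 \<le> u \<and> P u > 0}"
  have "eventually (\<lambda>u. P u < 0) (at 0)"
    using assms(1) P0 unfolding isCont_def by (rule order_tendstoD)
  then obtain \<delta> where "\<delta> > 0" and neg: "\<And>u. u \<noteq> 0 \<Longrightarrow> \<bar>u\<bar> < \<delta> \<Longrightarrow> P u < 0"
    unfolding eventually_at dist_real_def by auto
  obtain N where "\<And>u. N \<le> u \<Longrightarrow> P u > 0"
    using assms(3) unfolding eventually_at_top_linorder by blast
  then have "max N 0 \<in> S" unfolding S_def by simp
  then have ne: "S \<noteq> {}" by blast
  have bdd: "bdd_below S" unfolding S_def bdd_below_def by auto
  have "\<delta> \<le> s" if "s \<in> S" for s
    using neg[of s] P0 that unfolding S_def by (cases "s = 0") force+
  then have "\<delta> \<le> Inf S" using ne by (rule cInf_greatest[rotated])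
  then have "Inf S > 0" using \<open>\<delta> > 0\<close> by linarith
  moreover have "P u \<le> 0" if "0 \<le> u" "u < Inf S" for u
  proof (rule ccontr)
    assume "\<not> P u \<le> 0"
    then have "u \<in> S" using that(1) unfolding S_def by simp
    then have "Inf S \<le> u" using bdd by (rule cInf_lower)
    then show False using that(2) by simp
  qed
  moreover have "P u \<ge> 0" if "Inf S < u" for u
  proof -
    from that obtain s where "s \<in> S" "s < u" unfolding cInf_less_iff[OF ne bdd] by blast
    then show ?thesis using no_downcrossing[of s u] unfolding S_def by simp
  qed
  ultimately show ?thesis by blast
qed

lemma mono_mult_single_crossing_le:
  fixes f P :: "real \<Rightarrow> real"
  assumes "mono_on {0..} f" "0 \<le> u0" "0 \<le> u"
    and "u < u0 \<Longrightarrow> P u \<le> 0" and "u0 < u \<Longrightarrow> P u \<ge> 0"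
  shows "f u0 * P u \<le> f u * P u"
proof (cases u0 u rule: linorder_cases)
  case less
  then show ?thesis using assms mono_onD[OF assms(1), of u0 u] by (simp add: mult_right_mono)
next
  case greater
  then show ?thesis using assms mono_onD[OF assms(1), of u u0] by (simp add: mult_right_mono_neg)
qed simp

theorem mainTheorem12:
  fixes c lam :: "nat \<Rightarrow> real" and k :: nat
  assumes lam_pos: "0 < lam 1"
    and lam_incr: "\<forall>l. 1 \<le> l \<and> l < k \<longrightarrow> lam l < lam (l + 1)"
    and c_nz: "\<forall>l. 1 \<le> l \<and> l \<le> k \<longrightarrow> c l \<noteq> 0"
    and signs: "sign_changes c k \<le> 2"
    and P0: "expsum c lam k 0 < 0"
    and Ppos: "eventually (\<lambda>u. expsum c lam k u > 0) at_top"
    and Plim: "((\<lambda>u. expsum c lam k u) \<longlongrightarrow> 0) at_top"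
  shows "\<exists>u0 > 0. \<forall>(f :: real \<Rightarrow> real) (\<nu> :: real measure).
           mono_on {0..} f \<longrightarrow>
           sets \<nu> = sets (restrict_space borel {0..}) \<longrightarrow>
           finite_measure \<nu> \<longrightarrow>
           integrable \<nu> (\<lambda>u. f u * expsum c lam k u) \<longrightarrow>
           integrable \<nu> (\<lambda>u. expsum c lam k u) \<longrightarrow>
           (\<integral>u. f u * expsum c lam k u \<partial>\<nu>) \<ge> f u0 * (\<integral>u. expsum c lam k u \<partial>\<nu>)"
proof -
  have cont: "isCont (expsum c lam k) 0" by (rule DERIV_isCont[OF expsum_has_real_derivative])
  have no_downcrossing: "\<And>a b. 0 \<le> a \<Longrightarrow> a < b \<Longrightarrow> expsum c lam k a > 0 \<Longrightarrow> expsum c lam k b \<ge> 0"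
    by (rule expsum_no_downcrossing[OF lam_incr c_nz signs P0 Ppos])
  have "\<exists>u0 > 0. (\<forall>u. 0 \<le> u \<and> u < u0 \<longrightarrow> expsum c lam k u \<le> 0) \<and> (\<forall>u > u0. expsum c lam k u \<ge> 0)"
    using cont P0 Ppos no_downcrossing by (rule single_sign_crossing)
  then obtain u0 where u0: "u0 > 0" "\<And>u. 0 \<le> u \<Longrightarrow> u < u0 \<Longrightarrow> expsum c lam k u \<le> 0"
    "\<And>u. u0 < u \<Longrightarrow> expsum c lam k u \<ge> 0"
    by blast
  show ?thesis
  proof (intro exI[of _ u0] conjI allI impI)
    fix f :: "real \<Rightarrow> real" and \<nu> :: "real measure"
    assume mono: "mono_on {0..} f" and sets: "sets \<nu> = sets (restrict_space borel {0..})"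
      and "finite_measure \<nu>" and int: "integrable \<nu> (\<lambda>u. f u * expsum c lam k u)"
      "integrable \<nu> (\<lambda>u. expsum c lam k u)"
    have "space \<nu> = {0..}" using sets_eq_imp_space_eq[OF sets] by (simp add: space_restrict_space)
    then have "f u0 * expsum c lam k u \<le> f u * expsum c lam k u" if "u \<in> space \<nu>" for u
      using mono_mult_single_crossing_le[OF mono, of u0 u "expsum c lam k"] u0 that by simp
    then have "(\<integral>u. f u0 * expsum c lam k u \<partial>\<nu>) \<le> (\<integral>u. f u * expsum c lam k u \<partial>\<nu>)"
      by (intro integral_mono) (use int in simp_all)
    then show "f u0 * (\<integral>u. expsum c lam k u \<partial>\<nu>) \<le> (\<integral>u. f u * expsum c lam k u \<partial>\<nu>)" by simp
  qed (rule u0(1))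
qed

end
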